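(* Let $\mathcal G$ be a 2-group such that the sets of objects $\mathcal G_0$, morphisms $\mathcal G_1$ and composable morphisms are manifolds, all structure maps (source $s$, target $t$, identity, composition) are smooth, and the multiplication functor $\otimes$, the inversion functor $\overline{\,\cdot\,}$ and the associator $\alpha$ are smooth. If $s^{-1}(\mathbb1)\subseteq\mathcal G_1$ is discrete in the induced topology, then the map $(\mathcal G_0)^3\to s^{-1}(\mathbb1)$, $(g,h,k)\mapsto\alpha(g,h,k)\otimes\mathrm{id}_{\overline{(g\otimes h)\otimes k}}$, is locally constant.
   Context: Manifolds are modelled on locally convex spaces. A 2-group is a small category $\mathcal G$ with a multiplication functor $\otimes\colon\mathcal G\times\mathcal G\to\mathcal G$, an inversion functor $\overline{\,\cdot\,}\colon\mathcal G\to\mathcal G$, a unit object $\mathbb1$ and natural isomorphisms (associators) $\alpha(g,h,k)=\alpha_{g,h,k}\colon(g\otimes h)\otimes k\to g\otimes(h\otimes k)$ such that $g\otimes\mathbb1=g=\mathbb1\otimes g$ and $g\otimes\overline g=\mathbb1=\overline g\otimes g$ on objects and morphisms (with $\mathbb 1$ identified with $\mathrm{id}_{\mathbb1}$), $\alpha$ satisfies the pentagon identity $\alpha_{g,h,k\otimes l}\circ\alpha_{g\otimes h,k,l}=(\mathrm{id}_g\otimes\alpha_{h,k,l})\circ\alpha_{g,h\otimes k,l}\circ(\alpha_{g,h,k}\otimes\mathrm{id}_l)$, $\alpha_{g,h,k}$ is an identity if one of $g,h,k$ is $\mathbb1$, and $\alpha_{g,\overline g,g}=\mathrm{id}_g$,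 $\alpha_{\overline g,g,\overline g}=\mathrm{id}_{\overline g}$. *)

theory Defs
  imports "HOL-Analysis.Analysis"
begin

text \<open>Data of a 2-group: a small category (objects in the topological carrier of obj_top,
  morphisms in that of mor_top) with source, target, identities and composition
  (cmp g f is g after f, defined when src g = tgt f), a multiplication functor
  (tns_o on objects, tns_m on morphisms), an inversion functor (inv_o, inv_m),
  a unit object and the associator.\<close>

record ('o, 'm) two_group_data =
  obj_top :: "'o topology"
  mor_top :: "'m topology"
  src :: "'m \<Rightarrow> 'o"
  tgt :: "'m \<Rightarrow> 'o"
  idm :: "'o \<Rightarrow> 'm"
  cmp :: "'m \<Rightarrow> 'm \<Rightarrow> 'm"
  tns_o :: "'o \<Rightarrow> 'o \<Rightarrow> 'o"
  tns_m :: "'m \<Rightarrow> 'm \<Rightarrow> 'm"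
  inv_o :: "'o \<Rightarrow> 'o"
  inv_m :: "'m \<Rightarrow> 'm"
  unit_o :: "'o"
  assoc :: "'o \<Rightarrow> 'o \<Rightarrow> 'o \<Rightarrow> 'm"

definition objs :: "('o, 'm, 'z) two_group_data_scheme \<Rightarrow> 'o set" where
  "objs G = topspace (obj_top G)"

definition mors :: "('o, 'm, 'z) two_group_data_scheme \<Rightarrow> 'm set" where
  "mors G = topspace (mor_top G)"

definition hom :: "('o, 'm, 'z) two_group_data_scheme \<Rightarrow> 'o \<Rightarrow> 'o \<Rightarrow> 'm set" where
  "hom G x y = {f \<in> mors G. src G f = x \<and> tgt G f = y}"

definition composable :: "('o, 'm, 'z) two_group_data_scheme \<Rightarrow> ('m \<times> 'm) set" where
  "composable G = {(g, f). g \<in> mors G \<and> f \<in> mors G \<and> src G g = tgt G f}"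

definition is_iso :: "('o, 'm, 'z) two_group_data_scheme \<Rightarrow> 'm \<Rightarrow> bool" where
  "is_iso G f \<longleftrightarrow> f \<in> mors G \<and> (\<exists>h \<in> hom G (tgt G f) (src G f).
       cmp G h f = idm G (src G f) \<and> cmp G f h = idm G (tgt G f))"

definition is_category :: "('o, 'm, 'z) two_group_data_scheme \<Rightarrow> bool" where
  "is_category G \<longleftrightarrow>
     (\<forall>f \<in> mors G. src G f \<in> objs G \<and> tgt G f \<in> objs G) \<and>
     (\<forall>x \<in> objs G. idm G x \<in> hom G x x) \<and>
     (\<forall>(g, f) \<in> composable G. cmp G g f \<in> hom G (src G f) (tgt G g)) \<and>
     (\<forall>f \<in> mors G. cmp G f (idm G (src G f)) = f \<and> cmp G (idm G (tgt G f)) f = f) \<and>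
     (\<forall>f \<in> mors G. \<forall>g \<in> mors G. \<forall>h \<in> mors G.
        src G h = tgt G g \<longrightarrow> src G g = tgt G f \<longrightarrow>
        cmp G h (cmp G g f) = cmp G (cmp G h g) f)"

definition is_two_group :: "('o, 'm, 'z) two_group_data_scheme \<Rightarrow> bool" where
  "is_two_group G \<longleftrightarrow>
     is_category G \<and>
     \<comment> \<open>multiplication is a functor G x G -> G\<close>
     (\<forall>x \<in> objs G. \<forall>y \<in> objs G. tns_o G x y \<in> objs G) \<and>
     (\<forall>f \<in> mors G. \<forall>g \<in> mors G. tns_m G f g \<in> mors G \<and>
        src G (tns_m G f g) = tns_o G (src G f) (src G g) \<and>
        tgt G (tns_m G f g) = tns_o G (tgt G f) (tgt G g)) \<and>
     (\<forall>x \<in> objs G. \<forall>y \<in> objs G. tns_m G (idm G x) (idm G y) = idm G (tns_o G x y)) \<and>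
     (\<forall>(f', f) \<in> composable G. \<forall>(g', g) \<in> composable G.
        tns_m G (cmp G f' f) (cmp G g' g) = cmp G (tns_m G f' g') (tns_m G f g)) \<and>
     \<comment> \<open>inversion is a functor G -> G\<close>
     (\<forall>x \<in> objs G. inv_o G x \<in> objs G) \<and>
     (\<forall>f \<in> mors G. inv_m G f \<in> mors G \<and>
        src G (inv_m G f) = inv_o G (src G f) \<and> tgt G (inv_m G f) = inv_o G (tgt G f)) \<and>
     (\<forall>x \<in> objs G. inv_m G (idm G x) = idm G (inv_o G x)) \<and>
     (\<forall>(g, f) \<in> composable G. inv_m G (cmp G g f) = cmp G (inv_m G g) (inv_m G f)) \<and>
     \<comment> \<open>unit (identified with its identity morphism) and strict inverses\<close>
     unit_o G \<in> objs G \<and>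
     (\<forall>x \<in> objs G. tns_o G x (unit_o G) = x \<and> tns_o G (unit_o G) x = x) \<and>
     (\<forall>f \<in> mors G. tns_m G f (idm G (unit_o G)) = f \<and> tns_m G (idm G (unit_o G)) f = f) \<and>
     (\<forall>x \<in> objs G. tns_o G x (inv_o G x) = unit_o G \<and> tns_o G (inv_o G x) x = unit_o G) \<and>
     (\<forall>f \<in> mors G. tns_m G f (inv_m G f) = idm G (unit_o G) \<and>
                    tns_m G (inv_m G f) f = idm G (unit_o G)) \<and>
     \<comment> \<open>associator: natural isomorphism (g h) k -> g (h k)\<close>
     (\<forall>x \<in> objs G. \<forall>y \<in> objs G. \<forall>z \<in> objs G.
        assoc G x y z \<in> hom G (tns_o G (tns_o G x y) z) (tns_o G x (tns_o G y z)) \<and>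
        is_iso G (assoc G x y z)) \<and>
     (\<forall>f1 \<in> mors G. \<forall>f2 \<in> mors G. \<forall>f3 \<in> mors G.
        cmp G (assoc G (tgt G f1) (tgt G f2) (tgt G f3)) (tns_m G (tns_m G f1 f2) f3) =
        cmp G (tns_m G f1 (tns_m G f2 f3)) (assoc G (src G f1) (src G f2) (src G f3))) \<and>
     \<comment> \<open>pentagon identity\<close>
     (\<forall>g \<in> objs G. \<forall>h \<in> objs G. \<forall>k \<in> objs G. \<forall>l \<in> objs G.
        cmp G (assoc G g h (tns_o G k l)) (assoc G (tns_o G g h) k l) =
        cmp G (tns_m G (idm G g) (assoc G h k l))
          (cmp G (assoc G g (tns_o G h k) l) (tns_m G (assoc G g h k) (idm G l)))) \<and>
     \<comment> \<open>normalisation of the associator\<close>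
     (\<forall>g \<in> objs G. \<forall>h \<in> objs G. \<forall>k \<in> objs G.
        (g = unit_o G \<or> h = unit_o G \<or> k = unit_o G) \<longrightarrow>
        assoc G g h k = idm G (tns_o G (tns_o G g h) k)) \<and>
     (\<forall>g \<in> objs G. assoc G g (inv_o G g) g = idm G g \<and>
                    assoc G (inv_o G g) g (inv_o G g) = idm G (inv_o G g))"

text \<open>Topological 2-group: all structure maps continuous (this is what smoothness of the
  structure maps of a Lie 2-group modelled on locally convex spaces yields; spaces Hausdorff).\<close>
definition topological_two_group :: "('o, 'm, 'z) two_group_data_scheme \<Rightarrow> bool" where
  "topological_two_group G \<longleftrightarrow>
     is_two_group G \<and>
     Hausdorff_space (obj_top G) \<and> Hausdorff_space (mor_top G) \<and>
     continuous_map (mor_top G) (obj_top G) (src G) \<and>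
     continuous_map (mor_top G) (obj_top G) (tgt G) \<and>
     continuous_map (obj_top G) (mor_top G) (idm G) \<and>
     continuous_map (subtopology (prod_topology (mor_top G) (mor_top G)) (composable G))
        (mor_top G) (\<lambda>(g, f). cmp G g f) \<and>
     continuous_map (prod_topology (obj_top G) (obj_top G)) (obj_top G) (\<lambda>(x, y). tns_o G x y) \<and>
     continuous_map (prod_topology (mor_top G) (mor_top G)) (mor_top G) (\<lambda>(f, g). tns_m G f g) \<and>
     continuous_map (obj_top G) (obj_top G) (inv_o G) \<and>
     continuous_map (mor_top G) (mor_top G) (inv_m G) \<and>
     continuous_map (prod_topology (obj_top G) (prod_topology (obj_top G) (obj_top G)))
        (mor_top G) (\<lambda>(x, y, z). assoc G x y z)"

definition locally_constant_on :: "'a topology \<Rightarrow> ('a \<Rightarrow> 'b) \<Rightarrow> bool" where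
  "locally_constant_on X f \<longleftrightarrow>
     (\<forall>x \<in> topspace X. \<exists>U. openin X U \<and> x \<in> U \<and> (\<forall>y \<in> U. f y = f x))"

definition discrete_in :: "'a topology \<Rightarrow> 'a set \<Rightarrow> bool" where
  "discrete_in X S \<longleftrightarrow> (\<forall>U \<subseteq> S. openin (subtopology X S) U)"

end

theory Submission
  imports Defs
begin

text \<open>The map is the associator followed by right translation by the identity on the inverse
  of its source, which lands in the source fibre over the unit. Both are continuous, so the
  composite is a continuous map into a discrete subspace, hence locally constant.\<close>

lemma locally_constant_on_continuous_map_into_discrete:
  assumes "continuous_map X Y f" "f ` topspace X \<subseteq> S" "discrete_in Y S"
  shows "locally_constant_on X f"
  unfolding locally_constant_on_def
proof
  fix x assume x: "x \<in> topspace X"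
  have "continuous_map X (subtopology Y S) f"
    using assms(1,2) by (simp add: continuous_map_in_subtopology image_subset_iff_funcset)
  moreover have "openin (subtopology Y S) {f x}"
    using assms(2,3) x unfolding discrete_in_def by blast
  ultimately have "openin X {y \<in> topspace X. f y \<in> {f x}}"
    by (rule openin_continuous_map_preimage)
  then show "\<exists>U. openin X U \<and> x \<in> U \<and> (\<forall>y \<in> U. f y = f x)"
    using x by blast
qed

lemma is_categoryD:
  assumes "is_category G"
  shows "\<forall>f \<in> mors G. src G f \<in> objs G \<and> tgt G f \<in> objs G"
    and "\<forall>x \<in> objs G. idm G x \<in> hom G x x"
  using assms unfolding is_category_def
  apply -
  apply (elim conjE, assumption)+
  done

lemma is_two_groupD:
  assumes "is_two_group G"
  shows "is_category G"
    and "\<forall>f \<in> mors G. \<forall>g \<in> mors G. tns_m G f g \<in> mors G \<and>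
           src G (tns_m G f g) = tns_o G (src G f) (src G g) \<and>
           tgt G (tns_m G f g) = tns_o G (tgt G f) (tgt G g)"
    and "\<forall>x \<in> objs G. inv_o G x \<in> objs G"
    and "\<forall>x \<in> objs G. tns_o G x (inv_o G x) = unit_o G \<and> tns_o G (inv_o G x) x = unit_o G"
    and "\<forall>x \<in> objs G. \<forall>y \<in> objs G. \<forall>z \<in> objs G.
           assoc G x y z \<in> hom G (tns_o G (tns_o G x y) z) (tns_o G x (tns_o G y z)) \<and>
           is_iso G (assoc G x y z)"
  using assms unfolding is_two_group_def
  apply -
  apply (elim conjE, assumption)+
  done

lemma topological_two_groupD:
  assumes "topological_two_group G"
  shows "is_two_group G"
    and "continuous_map (mor_top G) (obj_top G) (src G)"
    and "continuous_map (obj_top G) (mor_top G) (idm G)"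
    and "continuous_map (prod_topology (mor_top G) (mor_top G)) (mor_top G)
           (\<lambda>(f, g). tns_m G f g)"
    and "continuous_map (obj_top G) (obj_top G) (inv_o G)"
    and "continuous_map (prod_topology (obj_top G) (prod_topology (obj_top G) (obj_top G)))
           (mor_top G) (\<lambda>(x, y, z). assoc G x y z)"
  using assms unfolding topological_two_group_def
  apply -
  apply (elim conjE, assumption)+
  done

definition shift_to_unit :: "('o, 'm, 'z) two_group_data_scheme \<Rightarrow> 'm \<Rightarrow> 'm" where
  "shift_to_unit G f = tns_m G f (idm G (inv_o G (src G f)))"

lemma shift_to_unit_in_unit_fibre:
  assumes G: "is_two_group G" and f: "f \<in> mors G"
  shows "shift_to_unit G f \<in> {f \<in> mors G. src G f = unit_o G}"
proof -
  note cat = is_categoryD[OF is_two_groupD(1)[OF G]]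
  have x: "src G f \<in> objs G"
    using cat(1) f by blast
  then have "idm G (inv_o G (src G f)) \<in> hom G (inv_o G (src G f)) (inv_o G (src G f))"
    using cat(2) is_two_groupD(3)[OF G] by blast
  moreover have "tns_o G (src G f) (inv_o G (src G f)) = unit_o G"
    using is_two_groupD(4)[OF G] x by blast
  ultimately show ?thesis
    using is_two_groupD(2)[OF G] f unfolding shift_to_unit_def hom_def by auto
qed

lemma continuous_map_shift_to_unit:
  assumes "topological_two_group G"
  shows "continuous_map (mor_top G) (mor_top G) (shift_to_unit G)"
proof -
  note cont = topological_two_groupD[OF assms]
  have "continuous_map (mor_top G) (mor_top G) (\<lambda>f. idm G (inv_o G (src G f)))"
    using continuous_map_compose[OF continuous_map_compose[OF cont(2) cont(5)] cont(3)]
    by (simp add: o_def)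
  then have "continuous_map (mor_top G) (prod_topology (mor_top G) (mor_top G))
               (\<lambda>f. (f, idm G (inv_o G (src G f))))"
    by (simp add: continuous_map_pairedI)
  from continuous_map_compose[OF this cont(4)] show ?thesis
    by (simp add: shift_to_unit_def[abs_def] o_def)
qed

theorem lemma2p6:
  fixes G :: "('o, 'm) two_group_data"
  assumes "topological_two_group G"
    and "discrete_in (mor_top G) {f \<in> mors G. src G f = unit_o G}"
  shows "(\<forall>(g, h, k) \<in> objs G \<times> objs G \<times> objs G.
            tns_m G (assoc G g h k) (idm G (inv_o G (tns_o G (tns_o G g h) k)))
              \<in> {f \<in> mors G. src G f = unit_o G}) \<and>
         locally_constant_on (prod_topology (obj_top G) (prod_topology (obj_top G) (obj_top G)))
           (\<lambda>(g, h, k). tns_m G (assoc G g h k) (idm G (inv_o G (tns_o G (tns_o G g h) k))))"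
proof -
  let ?X = "prod_topology (obj_top G) (prod_topology (obj_top G) (obj_top G))"
  let ?F = "\<lambda>(g, h, k). tns_m G (assoc G g h k) (idm G (inv_o G (tns_o G (tns_o G g h) k)))"
  let ?A = "\<lambda>(g, h, k). assoc G g h k"
  note G = topological_two_groupD[OF assms(1)]
  have topX: "topspace ?X = objs G \<times> objs G \<times> objs G"
    by (simp add: objs_def)
  have A: "?A p \<in> mors G \<and> ?F p = shift_to_unit G (?A p)" if "p \<in> topspace ?X" for p
    using is_two_groupD(5)[OF G(1)] that unfolding topX hom_def shift_to_unit_def by auto
  then have F_in: "?F ` topspace ?X \<subseteq> {f \<in> mors G. src G f = unit_o G}"
    using shift_to_unit_in_unit_fibre[OF G(1)] by auto
  have "continuous_map ?X (mor_top G) (shift_to_unit G \<circ> ?A)"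
    using continuous_map_compose[OF G(6) continuous_map_shift_to_unit[OF assms(1)]] .
  then have "continuous_map ?X (mor_top G) ?F"
    by (rule continuous_map_eq) (simp add: A)
  then have "locally_constant_on ?X ?F"
    using F_in assms(2) by (rule locally_constant_on_continuous_map_into_discrete)
  with F_in show ?thesis
    unfolding topX image_subset_iff by simp
qed

end
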